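(* Let $d\in\mathbb{N}^\star$, $0<\alpha\le\beta<\infty$, $\mathcal{M}$ the set of symmetric matrices $A\in\mathbb{R}^{d\times d}$ with $\alpha|\xi|^2\le\xi^TA\xi\le\beta|\xi|^2$ for all $\xi$, and $B$ the open unit ball of $\mathbb{R}^d$ with characteristic function $\chi_B$. Let $(p_i)_{1\le i\le d}$ be a basis of $\mathbb{R}^d$ and $A_1,A_2\in\mathcal{M}$ constant matrices such that for every $1\le i\le d$, $$-\operatorname{div}\Big(\big(A_1\chi_B+A_2(1-\chi_B)\big)p_i\Big)=0\ \text{ in }\mathcal{D}'(\mathbb{R}^d).$$ Then $A_1=A_2$. *)

theory Defs
  imports "HOL-Analysis.Analysis"
begin

fun Ck :: "nat \<Rightarrow> ('a::euclidean_space \<Rightarrow> real) \<Rightarrow> bool" where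
  "Ck 0 f = continuous_on UNIV f"
| "Ck (Suc k) f = (f differentiable_on UNIV \<and>
      (\<forall>v. Ck k (\<lambda>x. frechet_derivative f (at x) v)))"

definition smooth_fun :: "('a::euclidean_space \<Rightarrow> real) \<Rightarrow> bool" where
  "smooth_fun f \<longleftrightarrow> (\<forall>k. Ck k f)"

definition test_fun :: "('a::euclidean_space \<Rightarrow> real) \<Rightarrow> bool" where
  "test_fun \<phi> \<longleftrightarrow> smooth_fun \<phi> \<and> compact (closure {x. \<phi> x \<noteq> 0})"

definition ellip :: "real \<Rightarrow> real \<Rightarrow> (real^'n^'n) set" where
  "ellip \<alpha> \<beta> = {A. transpose A = A \<and>
     (\<forall>\<xi>. \<alpha> * (norm \<xi>)\<^sup>2 \<le> \<xi> \<bullet> (A *v \<xi>) \<and> \<xi> \<bullet> (A *v \<xi>) \<le> \<beta> * (norm \<xi>)\<^sup>2)}"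

text \<open>-div F = 0 in D'(R^d): for all test functions phi, the integral of F . grad phi vanishes.\<close>
definition div_free_distr :: "(real^'n \<Rightarrow> real^'n) \<Rightarrow> bool" where
  "div_free_distr F \<longleftrightarrow> (\<forall>\<phi>. test_fun \<phi> \<longrightarrow>
     integral UNIV (\<lambda>x. frechet_derivative \<phi> (at x) (F x)) = 0)"

end

theory Submission
  imports Defs
begin

text \<open>Write the field as \<open>u + w \<chi>\<^sub>B\<close> with \<open>u = A\<^sub>2 p\<^sub>i\<close> and \<open>w = (A\<^sub>1 - A\<^sub>2) p\<^sub>i\<close>,
  and test it against a smooth compactly supported \<open>\<phi>\<^sub>l\<close> that coincides with \<open>x \<bullet> w\<close> on the
  ball of radius \<open>l \<ge> 1\<close>, with \<open>\<phi>\<^sub>l(x) = l \<phi>\<^sub>1(x/l)\<close>. On \<open>B\<close> the gradient of \<open>\<phi>\<^sub>l\<close> is \<open>w\<close>,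
  so the pairing equals \<open>l\<^sup>d \<integral> D\<phi>\<^sub>1 u + |w|\<^sup>2 |B|\<close>. It vanishes for \<open>l = 1\<close> and \<open>l = 2\<close>,
  which forces \<open>|w|\<^sup>2 |B| = 0\<close>; the scaling replaces the integration by parts showing
  \<open>\<integral> D\<phi>\<^sub>1 u = 0\<close>. Hence \<open>A\<^sub>1 - A\<^sub>2\<close> kills a spanning family.
  Smoothness of \<open>\<phi>\<^sub>l\<close> is certified by building it inside an algebra of functions
  closed under differentiation, generated by \<open>exp(-1/t)/t\<^sup>m\<close>.\<close>

definition flat_exp :: "nat \<Rightarrow> real \<Rightarrow> real" where
  "flat_exp m t = (if t > 0 then exp (- 1 / t) / t ^ m else 0)"

lemma flat_exp_nonneg: "flat_exp m t \<ge> 0"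
  by (simp add: flat_exp_def)

lemma flat_exp_pos: "t > 0 \<Longrightarrow> flat_exp m t > 0"
  by (simp add: flat_exp_def)

lemma tendsto_exp_neg_inverse_div_power: "((\<lambda>t. exp (- 1 / t) / t ^ m) \<longlongrightarrow> 0) (at_right (0::real))"
proof -
  have "((\<lambda>s. s ^ m / exp s) \<longlongrightarrow> (0::real)) at_top"
    by (rule tendsto_power_div_exp_0)
  then have "((\<lambda>t. inverse t ^ m / exp (inverse t)) \<longlongrightarrow> (0::real)) (at_right 0)"
    using filterlim_compose filterlim_inverse_at_top_right by blast
  then show ?thesis
    by (rule Lim_transform_eventually)
      (auto intro: eventually_mono[OF eventually_at_right_less] simp: exp_minus field_simps power_inverse)
qed

lemma flat_exp_has_real_derivative_pos:
  assumes "t > 0"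
  shows "(flat_exp m has_real_derivative flat_exp (m + 2) t - real m * flat_exp (m + 1) t) (at t)"
proof -
  have "((\<lambda>t. exp (- 1 / t) / t ^ m) has_real_derivative
      exp (- 1 / t) * (1 / t\<^sup>2) / t ^ m - exp (- 1 / t) * (real m * t ^ (m - 1)) / (t ^ m)\<^sup>2) (at t)"
    using assms by (auto intro!: derivative_eq_intros simp: power2_eq_square diff_divide_distrib)
  also have "exp (- 1 / t) * (1 / t\<^sup>2) / t ^ m - exp (- 1 / t) * (real m * t ^ (m - 1)) / (t ^ m)\<^sup>2
      = flat_exp (m + 2) t - real m * flat_exp (m + 1) t"
    using assms by (cases m) (auto simp: flat_exp_def field_simps power2_eq_square)
  finally have "((\<lambda>t. exp (- 1 / t) / t ^ m) has_real_derivative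
      flat_exp (m + 2) t - real m * flat_exp (m + 1) t) (at t)" .
  then show ?thesis
    by (rule has_field_derivative_transform_within_open[where S = "{0<..}"])
      (use assms in \<open>auto simp: flat_exp_def\<close>)
qed

lemma flat_exp_has_real_derivative_neg:
  assumes "t < 0"
  shows "(flat_exp m has_real_derivative 0) (at t)"
  by (rule has_field_derivative_transform_within_open[where S = "{..<0}" and f = "\<lambda>_. 0"])
    (use assms in \<open>auto simp: flat_exp_def\<close>)

lemma flat_exp_has_real_derivative_0: "(flat_exp m has_real_derivative 0) (at 0)"
proof -
  have "((\<lambda>t. flat_exp m t / t) \<longlongrightarrow> 0) (at 0)"
  proof (rule filterlim_split_at_real)
    show "((\<lambda>t. flat_exp m t / t) \<longlongrightarrow> 0) (at_left 0)"
      by (rule tendsto_eventually) (auto intro: eventually_at_leftI[of "-1"] simp: flat_exp_def)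
    show "((\<lambda>t. flat_exp m t / t) \<longlongrightarrow> 0) (at_right 0)"
      by (rule Lim_transform_eventually[OF tendsto_exp_neg_inverse_div_power[of "m + 1"]])
        (auto intro: eventually_mono[OF eventually_at_right_less] simp: flat_exp_def)
  qed
  then show ?thesis
    by (simp add: has_field_derivative_iff flat_exp_def)
qed

lemma flat_exp_has_real_derivative:
  "(flat_exp m has_real_derivative flat_exp (m + 2) t - real m * flat_exp (m + 1) t) (at t)"
  using flat_exp_has_real_derivative_pos[of t m] flat_exp_has_real_derivative_neg[of t m]
    flat_exp_has_real_derivative_0[of m]
  by (cases t "0::real" rule: linorder_cases) (auto simp: flat_exp_def)

inductive_set smooth_terms :: "('a::euclidean_space \<Rightarrow> real) set" where
  smooth_terms_const: "(\<lambda>x. c) \<in> smooth_terms"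
| smooth_terms_inner: "(\<lambda>x. x \<bullet> a) \<in> smooth_terms"
| smooth_terms_norm_sq: "(\<lambda>x. x \<bullet> x) \<in> smooth_terms"
| smooth_terms_add: "f \<in> smooth_terms \<Longrightarrow> g \<in> smooth_terms \<Longrightarrow> (\<lambda>x. f x + g x) \<in> smooth_terms"
| smooth_terms_mult: "f \<in> smooth_terms \<Longrightarrow> g \<in> smooth_terms \<Longrightarrow> (\<lambda>x. f x * g x) \<in> smooth_terms"
| smooth_terms_flat_exp: "f \<in> smooth_terms \<Longrightarrow> (\<lambda>x. flat_exp m (f x)) \<in> smooth_terms"
| smooth_terms_inverse: "f \<in> smooth_terms \<Longrightarrow> (\<forall>x. f x > 0) \<Longrightarrow> (\<lambda>x. inverse (f x)) \<in> smooth_terms"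

lemma smooth_terms_has_derivative:
  assumes "f \<in> smooth_terms"
  shows "\<exists>D. (\<forall>x. (f has_derivative D x) (at x)) \<and> (\<forall>v. (\<lambda>x. D x v) \<in> smooth_terms)"
  using assms
proof induction
  case (smooth_terms_const c)
  show ?case
    by (rule exI[of _ "\<lambda>x v. 0"]) (auto intro: smooth_terms.intros)
next
  case (smooth_terms_inner a)
  show ?case
    by (rule exI[of _ "\<lambda>x v. v \<bullet> a"]) (auto intro!: smooth_terms.intros derivative_eq_intros)
next
  case smooth_terms_norm_sq
  have "((\<lambda>x. x \<bullet> x) has_derivative (\<lambda>v. x \<bullet> (2 *\<^sub>R v))) (at x)" for x :: 'a
    by (auto intro!: derivative_eq_intros simp: inner_commute algebra_simps)
  then show ?case
    by (intro exI[of _ "\<lambda>x v. x \<bullet> (2 *\<^sub>R v)"]) (blast intro: smooth_terms_inner)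
next
  case (smooth_terms_add f g)
  then obtain Df Dg where "\<forall>x. (f has_derivative Df x) (at x)" "\<forall>v. (\<lambda>x. Df x v) \<in> smooth_terms"
    and "\<forall>x. (g has_derivative Dg x) (at x)" "\<forall>v. (\<lambda>x. Dg x v) \<in> smooth_terms"
    by blast
  then show ?case
    by (intro exI[of _ "\<lambda>x v. Df x v + Dg x v"]) (auto intro!: smooth_terms.intros derivative_eq_intros)
next
  case (smooth_terms_mult f g)
  then obtain Df Dg where "\<forall>x. (f has_derivative Df x) (at x)" "\<forall>v. (\<lambda>x. Df x v) \<in> smooth_terms"
    and "\<forall>x. (g has_derivative Dg x) (at x)" "\<forall>v. (\<lambda>x. Dg x v) \<in> smooth_terms"
    by blast
  with smooth_terms_mult.hyps show ?case
    by (intro exI[of _ "\<lambda>x v. f x * Dg x v + Df x v * g x"])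
      (auto intro!: smooth_terms.intros derivative_eq_intros)
next
  case (smooth_terms_flat_exp f m)
  then obtain Df where Df: "\<forall>x. (f has_derivative Df x) (at x)" "\<forall>v. (\<lambda>x. Df x v) \<in> smooth_terms"
    by blast
  define D where "D x = (\<lambda>v. (flat_exp (m + 2) (f x) + (- real m) * flat_exp (m + 1) (f x)) * Df x v)" for x
  have "((\<lambda>x. flat_exp m (f x)) has_derivative D x) (at x)" for x
    using has_derivative_compose[OF Df(1)[rule_format, of x]
        flat_exp_has_real_derivative[of m "f x", unfolded has_field_derivative_def]]
    by (simp add: D_def o_def mult.commute)
  moreover have "(\<lambda>x. D x v) \<in> smooth_terms" for v
    using Df smooth_terms_flat_exp.hyps unfolding D_def
    by (intro smooth_terms.intros) auto
  ultimately show ?case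
    by blast
next
  case (smooth_terms_inverse f)
  then obtain Df where Df: "\<forall>x. (f has_derivative Df x) (at x)" "\<forall>v. (\<lambda>x. Df x v) \<in> smooth_terms"
    by blast
  define D where "D x = (\<lambda>v. (- 1) * (inverse (f x) * (inverse (f x) * Df x v)))" for x
  have "f x \<noteq> 0" for x
    using smooth_terms_inverse.hyps(2) by (metis less_irrefl)
  then have "((\<lambda>x. inverse (f x)) has_derivative D x) (at x)" for x
    using Df(1) by (auto intro!: derivative_eq_intros simp: D_def algebra_simps)
  moreover have "(\<lambda>x. D x v) \<in> smooth_terms" for v
    using Df smooth_terms_inverse.hyps unfolding D_def
    by (intro smooth_terms.intros) auto
  ultimately show ?case
    by blast
qed

lemma smooth_terms_Ck: "f \<in> smooth_terms \<Longrightarrow> Ck k f"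
proof (induction k arbitrary: f)
  case 0
  then obtain D where "\<forall>x. (f has_derivative D x) (at x)"
    using smooth_terms_has_derivative by blast
  then show ?case
    by (metis differentiable_def differentiable_imp_continuous_on differentiable_on_def Ck.simps(1))
next
  case (Suc k)
  then obtain D where D: "\<forall>x. (f has_derivative D x) (at x)" "\<forall>v. (\<lambda>x. D x v) \<in> smooth_terms"
    using smooth_terms_has_derivative by blast
  then have "frechet_derivative f (at x) = D x" for x
    by (metis frechet_derivative_at)
  with D show ?case
    by (auto simp: differentiable_on_def differentiable_def intro!: Suc.IH)
qed

definition smooth_step :: "real \<Rightarrow> real" where
  "smooth_step s = flat_exp 0 (4 - s) / (flat_exp 0 (4 - s) + flat_exp 0 (s - 1))"

lemma smooth_step_denominator_pos: "flat_exp 0 (4 - s) + flat_exp 0 (s - 1) > 0"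
  using flat_exp_pos[of "4 - s" 0] flat_exp_pos[of "s - 1" 0] flat_exp_nonneg[of 0 "4 - s"]
    flat_exp_nonneg[of 0 "s - 1"]
  by (cases "s < 4") auto

lemma smooth_step_eq_1: "s \<le> 1 \<Longrightarrow> smooth_step s = 1"
  using flat_exp_pos[of "4 - s" 0] by (simp add: smooth_step_def flat_exp_def[of 0 "s - 1"])

lemma smooth_step_eq_0: "4 \<le> s \<Longrightarrow> smooth_step s = 0"
  by (simp add: smooth_step_def flat_exp_def[of 0 "4 - s"])

lemma smooth_terms_smooth_step_norm_sq: "(\<lambda>x. smooth_step (a * (x \<bullet> x))) \<in> smooth_terms"
proof -
  have "(\<lambda>x. flat_exp 0 (4 + (- a) * (x \<bullet> x)) * inverse (flat_exp 0 (4 + (- a) * (x \<bullet> x))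
      + flat_exp 0 (- 1 + a * (x \<bullet> x)))) \<in> smooth_terms"
    using smooth_step_denominator_pos by (intro smooth_terms.intros) (auto simp: algebra_simps)
  then show ?thesis
    by (simp add: smooth_step_def divide_inverse algebra_simps)
qed

definition cutoff_inner :: "'a::euclidean_space \<Rightarrow> real \<Rightarrow> 'a \<Rightarrow> real" where
  "cutoff_inner w l x = (x \<bullet> w) * smooth_step ((x \<bullet> x) / l\<^sup>2)"

lemma smooth_terms_cutoff_inner: "cutoff_inner w l \<in> smooth_terms"
proof -
  have "(\<lambda>x. (x \<bullet> w) * smooth_step ((1 / l\<^sup>2) * (x \<bullet> x))) \<in> smooth_terms"
    by (intro smooth_terms_mult smooth_terms_inner smooth_terms_smooth_step_norm_sq)
  then show ?thesis
    by (simp add: cutoff_inner_def[abs_def])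
qed

lemma cutoff_inner_eq_inner:
  assumes "norm x < l"
  shows "cutoff_inner w l x = x \<bullet> w"
proof -
  have "x \<bullet> x \<le> l\<^sup>2"
    using assms by (metis norm_ge_zero power2_norm_eq_inner power_mono less_imp_le)
  moreover have "l > 0"
    using assms norm_ge_zero[of x] by linarith
  ultimately show ?thesis
    by (simp add: cutoff_inner_def smooth_step_eq_1)
qed

lemma cutoff_inner_eq_0:
  assumes "0 < l" "2 * l < norm x"
  shows "cutoff_inner w l x = 0"
proof -
  have "(2 * l)\<^sup>2 \<le> x \<bullet> x"
    using assms by (metis power2_norm_eq_inner power_mono less_imp_le mult_pos_pos zero_less_numeral)
  with assms(1) show ?thesis
    by (simp add: cutoff_inner_def smooth_step_eq_0 power_mult_distrib field_simps)
qed

lemma cutoff_inner_rescale: "0 < l \<Longrightarrow> cutoff_inner w l x = l * cutoff_inner w 1 (x /\<^sub>R l)"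
  by (simp add: cutoff_inner_def field_simps power2_eq_square)

lemma test_fun_cutoff_inner:
  assumes "0 < l"
  shows "test_fun (cutoff_inner w l)"
proof -
  have "{x. cutoff_inner w l x \<noteq> 0} \<subseteq> cball 0 (2 * l)"
    using cutoff_inner_eq_0[OF assms] by (force simp: not_less)
  then have "bounded {x. cutoff_inner w l x \<noteq> 0}"
    using bounded_cball bounded_subset by blast
  then show ?thesis
    by (simp add: test_fun_def smooth_fun_def smooth_terms_Ck smooth_terms_cutoff_inner)
qed

lemma cutoff_inner_has_derivative:
  "(cutoff_inner w l has_derivative frechet_derivative (cutoff_inner w l) (at x)) (at x)"
  using smooth_terms_has_derivative[OF smooth_terms_cutoff_inner]
  by (metis frechet_derivative_at)

lemma frechet_derivative_cutoff_inner_rescale: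
  assumes "0 < l"
  shows "frechet_derivative (cutoff_inner w l) (at x) = frechet_derivative (cutoff_inner w 1) (at (x /\<^sub>R l))"
proof -
  let ?D = "frechet_derivative (cutoff_inner w 1) (at (x /\<^sub>R l))"
  have "((\<lambda>x. x /\<^sub>R l) has_derivative (\<lambda>v. v /\<^sub>R l)) (at x)"
    by (auto intro!: derivative_eq_intros)
  then have "((\<lambda>x. cutoff_inner w 1 (x /\<^sub>R l)) has_derivative (\<lambda>v. ?D (v /\<^sub>R l))) (at x)"
    using has_derivative_compose cutoff_inner_has_derivative by blast
  then have "((\<lambda>x. l * cutoff_inner w 1 (x /\<^sub>R l)) has_derivative (\<lambda>v. l * ?D (v /\<^sub>R l))) (at x)"
    by (rule has_derivative_mult_right)
  moreover have "(\<lambda>v. l * ?D (v /\<^sub>R l)) = ?D"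
    using assms by (simp add: fun_eq_iff linear_cmul[OF has_derivative_linear[OF cutoff_inner_has_derivative]])
  moreover have "cutoff_inner w l = (\<lambda>x. l * cutoff_inner w 1 (x /\<^sub>R l))"
    using cutoff_inner_rescale[OF assms] by blast
  ultimately have "(cutoff_inner w l has_derivative ?D) (at x)"
    by metis
  then show ?thesis
    by (rule frechet_derivative_at[symmetric])
qed

lemma frechet_derivative_cutoff_inner_inside:
  assumes "norm x < l"
  shows "frechet_derivative (cutoff_inner w l) (at x) = (\<lambda>v. v \<bullet> w)"
proof -
  have "((\<lambda>y. y \<bullet> w) has_derivative (\<lambda>v. v \<bullet> w)) (at x)"
    by (auto intro!: derivative_eq_intros)
  then have "(cutoff_inner w l has_derivative (\<lambda>v. v \<bullet> w)) (at x)"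
    by (rule has_derivative_transform_within_open[where s = "ball 0 l"])
      (use assms in \<open>auto simp: cutoff_inner_eq_inner\<close>)
  then show ?thesis
    by (rule frechet_derivative_at[symmetric])
qed

lemma frechet_derivative_cutoff_inner_outside:
  assumes "0 < l" "2 * l < norm x"
  shows "frechet_derivative (cutoff_inner w l) (at x) = (\<lambda>v. 0)"
proof -
  have "(cutoff_inner w l has_derivative (\<lambda>v. 0)) (at x)"
    by (rule has_derivative_transform_within_open[where s = "- cball 0 (2 * l)" and f = "\<lambda>_. 0"])
      (use assms in \<open>auto simp: dist_norm not_le cutoff_inner_eq_0\<close>)
  then show ?thesis
    by (rule frechet_derivative_at[symmetric])
qed

lemma continuous_on_frechet_derivative_cutoff_inner:
  "continuous_on UNIV (\<lambda>x. frechet_derivative (cutoff_inner w l) (at x) v)"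
proof -
  have "Ck (Suc 0) (cutoff_inner w l)"
    by (rule smooth_terms_Ck[OF smooth_terms_cutoff_inner])
  then show ?thesis
    by simp
qed

lemma has_integral_rescale:
  fixes g :: "'a::euclidean_space \<Rightarrow> 'b::banach"
  assumes "continuous_on UNIV g" "bounded {x. g x \<noteq> 0}" "0 < l"
  shows "((\<lambda>x. g (x /\<^sub>R l)) has_integral l ^ DIM('a) *\<^sub>R integral UNIV g) UNIV"
proof -
  obtain a where a: "{x. g x \<noteq> 0} \<subseteq> cbox (- a) a"
    using bounded_subset_cbox_symmetric[OF assms(2)] by blast
  have g_cbox: "(g has_integral integral (cbox (- a) a) g) (cbox (- a) a)"
    using assms(1) by (auto intro: integrable_continuous continuous_on_subset)
  then have "(g has_integral integral (cbox (- a) a) g) UNIV"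
    by (rule has_integral_on_superset) (use a in auto)
  with g_cbox have "(g has_integral integral UNIV g) (cbox (- a) a)"
    by (metis integral_unique)
  then have "((\<lambda>x. g (x /\<^sub>R l)) has_integral l ^ DIM('a) *\<^sub>R integral UNIV g)
      ((\<lambda>x. l *\<^sub>R x) ` cbox (- a) a)"
    using has_integral_affinity[of g _ "- a" a "inverse l" 0] assms(3)
    by (simp add: power_inverse field_simps)
  then show ?thesis
  proof (rule has_integral_on_superset)
    show "g (x /\<^sub>R l) = 0" if "x \<notin> (\<lambda>x. l *\<^sub>R x) ` cbox (- a) a" for x
      using that a assms(3) image_eqI[of x "\<lambda>x. l *\<^sub>R x" "x /\<^sub>R l"] by auto
  qed auto
qed

lemma has_integral_cutoff_inner_jump:
  fixes u w :: "'a::euclidean_space"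
  assumes "1 \<le> l"
  shows "((\<lambda>x. frechet_derivative (cutoff_inner w l) (at x) (u + (if x \<in> ball 0 1 then w else 0)))
    has_integral l ^ DIM('a) * integral UNIV (\<lambda>y. frechet_derivative (cutoff_inner w 1) (at y) u)
      + (w \<bullet> w) * measure lebesgue (ball (0::'a) 1)) UNIV"
proof -
  define g where "g y = frechet_derivative (cutoff_inner w 1) (at y) u" for y
  have l: "0 < l"
    using assms by simp
  have g_cont: "continuous_on UNIV g"
    unfolding g_def by (rule continuous_on_frechet_derivative_cutoff_inner)
  have "{y. g y \<noteq> 0} \<subseteq> cball 0 2"
  proof
    show "y \<in> cball 0 2" if "y \<in> {y. g y \<noteq> 0}" for y
      using that frechet_derivative_cutoff_inner_outside[of 1 y w] by (force simp: g_def not_le)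
  qed
  then have "bounded {y. g y \<noteq> 0}"
    by (rule bounded_subset[OF bounded_cball])
  then have "((\<lambda>x. g (x /\<^sub>R l)) has_integral l ^ DIM('a) * integral UNIV g) UNIV"
    using has_integral_rescale[OF g_cont _ l] by simp
  moreover have "((\<lambda>x. (w \<bullet> w) * indicator (ball (0::'a) 1) x)
      has_integral (w \<bullet> w) * measure lebesgue (ball (0::'a) 1)) UNIV"
    using has_integral_mult_right lmeasurable_iff_has_integral lmeasurable_ball by blast
  ultimately have "((\<lambda>x. g (x /\<^sub>R l) + (w \<bullet> w) * indicator (ball (0::'a) 1) x)
      has_integral l ^ DIM('a) * integral UNIV g + (w \<bullet> w) * measure lebesgue (ball (0::'a) 1)) UNIV"
    by (rule has_integral_add)
  moreover have "frechet_derivative (cutoff_inner w l) (at x) (u + (if x \<in> ball 0 1 then w else 0))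
      = g (x /\<^sub>R l) + (w \<bullet> w) * indicator (ball (0::'a) 1) x" for x
  proof -
    have "linear (frechet_derivative (cutoff_inner w l) (at x))"
      using cutoff_inner_has_derivative has_derivative_linear by blast
    moreover have "frechet_derivative (cutoff_inner w l) (at x) w = w \<bullet> w" if "x \<in> ball 0 1"
      using that assms frechet_derivative_cutoff_inner_inside[of x l w] by simp
    ultimately show ?thesis
      by (simp add: g_def frechet_derivative_cutoff_inner_rescale[OF l] linear_add linear_0)
  qed
  ultimately show ?thesis
    by (simp add: g_def[abs_def])
qed

lemma div_free_distr_ball_jump_imp_eq_0:
  fixes u w :: "real^'n"
  assumes "div_free_distr (\<lambda>x. u + (if x \<in> ball 0 1 then w else 0))"
  shows "w = 0"
proof -
  define I where "I = integral UNIV (\<lambda>y. frechet_derivative (cutoff_inner w 1) (at y) u)"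
  define \<mu> where "\<mu> = measure lebesgue (ball (0::real^'n) 1)"
  have jump_eq: "l ^ DIM(real^'n) * I + (w \<bullet> w) * \<mu> = 0" if "1 \<le> l" for l
  proof -
    have "integral UNIV (\<lambda>x. frechet_derivative (cutoff_inner w l) (at x)
        (u + (if x \<in> ball 0 1 then w else 0))) = 0"
      using assms test_fun_cutoff_inner[of l w] that unfolding div_free_distr_def
      by (meson less_le_trans zero_less_one)
    then show ?thesis
      using integral_unique[OF has_integral_cutoff_inner_jump[OF that, where u = u and w = w]]
      by (simp add: I_def \<mu>_def)
  qed
  have "I + (w \<bullet> w) * \<mu> = 0" "2 ^ DIM(real^'n) * I + (w \<bullet> w) * \<mu> = 0"
    using jump_eq[of 1] jump_eq[of 2] by simp_all
  then have "2 ^ DIM(real^'n) * I = I"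
    by linarith
  moreover have "(1::real) < 2 ^ DIM(real^'n)"
    by (intro one_less_power) auto
  ultimately have "I = 0"
    by (metis mult_cancel_right2 less_irrefl)
  moreover have "\<mu> > 0"
    using content_ball_pos[of 1 "0::real^'n"] by (simp add: \<mu>_def)
  ultimately show "w = 0"
    using jump_eq[of 1] by simp
qed

theorem lemma4p4:
  fixes \<alpha> \<beta> :: real and A1 A2 :: "real^'n^'n" and p :: "'n \<Rightarrow> real^'n"
  assumes "0 < \<alpha>" "\<alpha> \<le> \<beta>"
    and "A1 \<in> ellip \<alpha> \<beta>" "A2 \<in> ellip \<alpha> \<beta>"
    and "inj p" "independent (range p)" "span (range p) = UNIV"
    and "\<And>i. div_free_distr
           (\<lambda>x. (if x \<in> ball 0 1 then A1 else A2) *v p i)"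
  shows "A1 = A2"
proof -
  have field_eq: "(\<lambda>x. (if x \<in> ball 0 1 then A1 else A2) *v p i)
      = (\<lambda>x. A2 *v p i + (if x \<in> ball 0 1 then (A1 - A2) *v p i else 0))" for i
    by (auto simp: matrix_vector_mult_diff_rdistrib)
  have "div_free_distr (\<lambda>x. A2 *v p i + (if x \<in> ball 0 1 then (A1 - A2) *v p i else 0))" for i
    by (subst field_eq[symmetric]) (rule assms(8))
  then have "(A1 - A2) *v p i = 0" for i
    by (rule div_free_distr_ball_jump_imp_eq_0)
  then have "(A1 - A2) *v x = 0" for x
    using linear_eq_0_on_span[OF matrix_vector_mul_linear[of "A1 - A2"], of "range p" x] assms(7) by auto
  then show ?thesis
    using matrix_eq[of "A1 - A2" 0] by simp
qed

end
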